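(* Let $r\ge1$ and let $p_1,p_2,\ldots,p_r$ be primes, each $\ge5$ (not necessarily distinct). Then for every $n\ge0$, \[ b_2\!\left(\prod_{s=1}^{r}p_s^2\, n+\frac{(24i+p_{r})\prod_{s=1}^{r-1}p_s^2\,p_{r}-1}{24}\right)\equiv 0 \pmod 2 \] for each $i=1,2,\ldots,p_r-1$ (with the empty product equal to $1$).
   Context: For a positive integer $\ell$, $b_\ell(n)$ denotes the number of partitions of $n$ having no part divisible by $\ell$. *)

theory Defs
  imports Main "HOL-Library.Multiset" "HOL-Computational_Algebra.Primes"
begin

definition partitions :: "nat \<Rightarrow> nat multiset set" where
  "partitions n = {M. (\<forall>x \<in># M. 0 < x) \<and> sum_mset M = n}"

definition b :: "nat \<Rightarrow> nat \<Rightarrow> nat" where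
  "b l n = card {M \<in> partitions n. \<forall>x \<in># M. \<not> l dvd x}"

end

theory Submission
  imports Defs "HOL-Library.Nat_Bijection" "HOL-Library.Disjoint_Sets" "HOL-Library.Z2"
begin

text \<open>By Glaisher's bijection, \<open>b 2 n\<close> also counts the partitions of \<open>n\<close> into distinct parts,
  and Franklin's involution is a fixed-point-free involution on these unless \<open>n\<close> is a pentagonal
  number \<open>k (3 k \<plusminus> 1) / 2\<close>, i.e. unless \<open>24 n + 1 = (6 k \<plusminus> 1)\<^sup>2\<close> is a square. For the arguments
  \<open>N\<close> of the theorem, \<open>24 N + 1 = R\<^sup>2 p (p (24 n + 1) + 24 i)\<close>, where \<open>p = p\<^sub>r\<close> and \<open>R\<close> is the
  product of the other primes; since \<open>0 < i < p\<close>, the prime \<open>p\<close> divides the cofactor of \<open>R\<^sup>2\<close> exactly once, so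
  \<open>24 N + 1\<close> is not a square.\<close>

lemma even_card_if_fixpoint_free_involution:
  assumes "\<And>x. x \<in> A \<Longrightarrow> f x \<in> A" "\<And>x. x \<in> A \<Longrightarrow> f (f x) = x" "\<And>x. x \<in> A \<Longrightarrow> f x \<noteq> x"
  shows "even (card A)"
proof -
  \<comment> \<open>\<open>bit\<close> is the field with two elements\<close>
  have "(\<Sum>x\<in>A. 1 :: bit) = 0"
    by (rule sum_involution_eq_0[where h = f]) (use assms in auto)
  then have "even (of_nat (card A) :: bit)"
    by simp
  then show ?thesis
    by (simp only: even_of_nat_iff)
qed

section \<open>Glaisher's bijection\<close>

definition odd_part :: "nat \<Rightarrow> nat" where
  "odd_part x = x div 2 ^ multiplicity 2 x"

lemma odd_part_times_pow2: "odd_part x * 2 ^ multiplicity 2 x = x"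
  unfolding odd_part_def using multiplicity_dvd[of "2::nat" x] by simp

lemma odd_odd_part: "x \<noteq> 0 \<Longrightarrow> odd (odd_part x)"
  unfolding odd_part_def using multiplicity_decompose[of x "2::nat"] by simp

lemma
  assumes "odd k"
  shows multiplicity_odd_times_pow2: "multiplicity 2 (k * 2 ^ j) = j"
    and odd_part_odd_times_pow2: "odd_part (k * 2 ^ j) = k"
proof -
  have "multiplicity (2::nat) (2 ^ j * k) = j"
    by (rule multiplicity_decomposeI) (use assms in auto)
  then show "multiplicity 2 (k * 2 ^ j) = j"
    by (simp add: mult.commute)
  then show "odd_part (k * 2 ^ j) = k"
    by (simp add: odd_part_def)
qed

lemma inj_times_pow2: "0 < k \<Longrightarrow> inj (\<lambda>j. k * 2 ^ j :: nat)"
  by (auto intro!: injI)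

lemma finite_times_pow2_vimage:
  fixes S :: "nat set"
  assumes "finite S" "0 < k"
  shows "finite {j. k * 2 ^ j \<in> S}"
  using finite_vimageI[OF assms(1) inj_times_pow2[OF assms(2)]] by (simp add: vimage_def)

definition distinct_partitions :: "nat \<Rightarrow> nat set set" where
  "distinct_partitions n = {S. finite S \<and> 0 \<notin> S \<and> \<Sum>S = n}"

definition odd_partitions :: "nat \<Rightarrow> nat multiset set" where
  "odd_partitions n = {M \<in> partitions n. \<forall>x \<in># M. odd x}"

text \<open>Glaisher's bijection: a part \<open>k * 2 ^ j\<close> with \<open>k\<close> odd is split into \<open>2 ^ j\<close> parts \<open>k\<close>;
  conversely the binary digits \<open>set_decode (count M k)\<close> of the multiplicity of \<open>k\<close> say which
  parts \<open>k * 2 ^ j\<close> the parts \<open>k\<close> merge into.\<close>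

definition glaisher_split :: "nat set \<Rightarrow> nat multiset" where
  "glaisher_split S = (\<Sum>x\<in>S. replicate_mset (2 ^ multiplicity 2 x) (odd_part x))"

definition glaisher_merge :: "nat multiset \<Rightarrow> nat set" where
  "glaisher_merge M = (\<lambda>(k, j). k * 2 ^ j) ` (SIGMA k:set_mset M. set_decode (count M k))"

lemma count_glaisher_split:
  assumes "finite S" "0 \<notin> S"
  shows "count (glaisher_split S) k = (if odd k then set_encode {j. k * 2 ^ j \<in> S} else 0)"
proof -
  have "count (glaisher_split S) k = (\<Sum>x\<in>S. if odd_part x = k then 2 ^ multiplicity 2 x else 0)"
    unfolding glaisher_split_def count_sum by (simp add: eq_commute[of k])
  also have "\<dots> = (\<Sum>x\<in>{x\<in>S. odd_part x = k}. 2 ^ multiplicity 2 x)"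
    using assms(1) by (simp add: sum.inter_filter)
  also have "\<dots> = (if odd k then set_encode {j. k * 2 ^ j \<in> S} else 0)"
  proof (cases "odd k")
    case True
    have "{x\<in>S. odd_part x = k} = (\<lambda>j. k * 2 ^ j) ` {j. k * 2 ^ j \<in> S}"
      using odd_part_times_pow2 odd_part_odd_times_pow2[OF True] by (auto simp: image_iff) metis
    moreover have "inj (\<lambda>j. k * 2 ^ j)"
      using True by (intro inj_times_pow2 odd_pos)
    ultimately show ?thesis
      using True by (simp add: sum.reindex inj_on_subset set_encode_def multiplicity_odd_times_pow2)
  next
    case False
    have "odd (odd_part x)" if "x \<in> S" for x
      using that assms(2) odd_odd_part by metis
    with False have "{x\<in>S. odd_part x = k} = {}"
      by blast
    then show ?thesis
      using False by (simp only: sum.empty) simp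
  qed
  finally show ?thesis .
qed

lemma odd_mem_glaisher_split: "finite S \<Longrightarrow> 0 \<notin> S \<Longrightarrow> \<forall>k \<in># glaisher_split S. odd k"
  using count_glaisher_split by (metis count_eq_zero_iff)

lemma sum_mset_glaisher_split: "finite S \<Longrightarrow> sum_mset (glaisher_split S) = \<Sum>S"
  unfolding glaisher_split_def
proof (induction S rule: finite_induct)
  case (insert x F)
  then show ?case
    using odd_part_times_pow2[of x] by (simp add: mult.commute)
qed simp

lemma mem_glaisher_merge:
  assumes "\<forall>k \<in># M. odd k"
  shows "x \<in> glaisher_merge M \<longleftrightarrow> x \<noteq> 0 \<and> multiplicity 2 x \<in> set_decode (count M (odd_part x))"
proof
  assume "x \<in> glaisher_merge M"
  then obtain k j where "k \<in># M" "j \<in> set_decode (count M k)" "x = k * 2 ^ j"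
    unfolding glaisher_merge_def by auto
  moreover from assms \<open>k \<in># M\<close> have "odd k"
    by blast
  ultimately show "x \<noteq> 0 \<and> multiplicity 2 x \<in> set_decode (count M (odd_part x))"
    by (auto simp: multiplicity_odd_times_pow2 odd_part_odd_times_pow2 odd_pos)
next
  assume x: "x \<noteq> 0 \<and> multiplicity 2 x \<in> set_decode (count M (odd_part x))"
  then have "odd_part x \<in># M"
    by (metis count_eq_zero_iff empty_iff set_decode_zero)
  with x show "x \<in> glaisher_merge M"
    unfolding glaisher_merge_def using odd_part_times_pow2[of x]
    by (auto intro!: image_eqI[of _ _ "(odd_part x, multiplicity 2 x)"])
qed

lemma finite_glaisher_merge: "finite (glaisher_merge M)"
  by (simp add: glaisher_merge_def)

lemma glaisher_merge_split:
  assumes "finite S" "0 \<notin> S"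
  shows "glaisher_merge (glaisher_split S) = S"
proof -
  note odd_parts = odd_mem_glaisher_split[OF assms]
  have "x \<in> glaisher_merge (glaisher_split S) \<longleftrightarrow> x \<in> S" for x
  proof (cases "x = 0")
    case False
    then have "odd (odd_part x)"
      by (rule odd_odd_part)
    moreover have "finite {j. odd_part x * 2 ^ j \<in> S}"
      using calculation by (intro finite_times_pow2_vimage[OF assms(1)] odd_pos)
    ultimately show ?thesis
      using False odd_part_times_pow2[of x]
      by (simp add: mem_glaisher_merge[OF odd_parts] count_glaisher_split[OF assms])
  qed (use assms in \<open>simp add: mem_glaisher_merge[OF odd_parts]\<close>)
  then show ?thesis
    by blast
qed

lemma glaisher_split_merge:
  assumes "\<forall>k \<in># M. odd k"
  shows "glaisher_split (glaisher_merge M) = M"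
proof (rule multiset_eqI)
  fix k
  have zero: "0 \<notin> glaisher_merge M"
    by (simp add: mem_glaisher_merge[OF assms])
  show "count (glaisher_split (glaisher_merge M)) k = count M k"
  proof (cases "odd k")
    case True
    then have "{j. k * 2 ^ j \<in> glaisher_merge M} = set_decode (count M k)"
      using odd_pos[OF True]
      by (simp add: mem_glaisher_merge[OF assms] multiplicity_odd_times_pow2 odd_part_odd_times_pow2)
    then show ?thesis
      using True by (simp add: count_glaisher_split[OF finite_glaisher_merge zero])
  next
    case False
    with assms have "k \<notin># M"
      by blast
    with False show ?thesis
      by (simp add: count_glaisher_split[OF finite_glaisher_merge zero] not_in_iff)
  qed
qed

lemma bij_betw_glaisher_split:
  "bij_betw glaisher_split (distinct_partitions n) (odd_partitions n)"
proof (rule bij_betw_byWitness[where f' = glaisher_merge])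
  show "\<forall>S \<in> distinct_partitions n. glaisher_merge (glaisher_split S) = S"
    by (simp add: distinct_partitions_def glaisher_merge_split)
  show "\<forall>M \<in> odd_partitions n. glaisher_split (glaisher_merge M) = M"
    by (simp add: odd_partitions_def glaisher_split_merge)
  show "glaisher_split ` distinct_partitions n \<subseteq> odd_partitions n"
  proof
    fix M assume "M \<in> glaisher_split ` distinct_partitions n"
    then obtain S where S: "finite S" "0 \<notin> S" "\<Sum>S = n" "M = glaisher_split S"
      by (auto simp: distinct_partitions_def)
    with odd_mem_glaisher_split[OF S(1,2)] show "M \<in> odd_partitions n"
      by (auto simp: odd_partitions_def partitions_def sum_mset_glaisher_split intro: odd_pos)
  qed
  show "glaisher_merge ` odd_partitions n \<subseteq> distinct_partitions n"
  proof
    fix S assume "S \<in> glaisher_merge ` odd_partitions n"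
    then obtain M where M: "\<forall>k \<in># M. odd k" "sum_mset M = n" "S = glaisher_merge M"
      by (auto simp: odd_partitions_def partitions_def)
    then have "\<Sum>S = n"
      using sum_mset_glaisher_split[OF finite_glaisher_merge] glaisher_split_merge by metis
    with M show "S \<in> distinct_partitions n"
      by (simp add: distinct_partitions_def finite_glaisher_merge mem_glaisher_merge)
  qed
qed

lemma b2_eq_card_distinct_partitions: "b 2 n = card (distinct_partitions n)"
  using bij_betw_same_card[OF bij_betw_glaisher_split] by (simp add: b_def odd_partitions_def)

section \<open>Franklin's involution\<close>

lemma sum_atLeastAtMost_Suc_shift: "\<Sum>{Suc m..Suc n} = \<Sum>{m..n} + card {m..n}"
proof -
  have "\<Sum>{Suc m..Suc n} = (\<Sum>i\<in>{m..n}. Suc i)"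
    by (rule sum.shift_bounds_cl_Suc_ivl)
  then show ?thesis
    unfolding Suc_eq_plus1 sum.distrib by simp
qed

lemma double_sum_atLeastLessThan:
  fixes a m :: nat
  shows "2 * \<Sum>{a..<a + m} + m = m * (2 * a + m)"
  by (induction m) (simp_all add: algebra_simps)

lemma pentagonal_number_square:
  fixes k :: nat
  assumes "0 < k"
  shows "24 * \<Sum>{k..<2 * k} + 1 = (6 * k - 1)\<^sup>2"
proof -
  obtain j where k: "k = Suc j"
    using assms gr0_implies_Suc by blast
  have "2 * \<Sum>{k..<2 * k} + k = k * (3 * k)"
    using double_sum_atLeastLessThan[of k k] by (simp add: mult_2)
  then show ?thesis
    unfolding k by (simp add: power2_eq_square algebra_simps)
qed

lemma second_pentagonal_number_square:
  fixes k :: nat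
  shows "24 * \<Sum>{k<..2 * k} + 1 = (6 * k + 1)\<^sup>2"
proof -
  have "{k<..2 * k} = {Suc k..<Suc k + k}"
    by auto
  then have "2 * \<Sum>{k<..2 * k} + k = k * (3 * k + 2)"
    using double_sum_atLeastLessThan[of "Suc k" k] by simp
  then show ?thesis
    by (simp add: power2_eq_square algebra_simps)
qed

definition top_run :: "nat set \<Rightarrow> nat" where
  "top_run S = (LEAST t. Max S - t \<notin> S)"

text \<open>Franklin's involution, for a partition \<open>S\<close> into distinct parts with smallest part
  \<open>s = Min S\<close> and top run \<open>{Max S - r + 1..Max S}\<close> of length \<open>r = top_run S\<close>: if \<open>s \<le> r\<close>, delete
  the part \<open>s\<close> and add 1 to each of the \<open>s\<close> largest parts; otherwise subtract 1 from each part of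
  the top run and add the new part \<open>r\<close>.\<close>

definition raise_top :: "nat set \<Rightarrow> nat set" where
  "raise_top S =
    (S - {Min S} - {Suc (Max S) - Min S..Max S}) \<union> {Suc (Suc (Max S)) - Min S..Suc (Max S)}"

definition lower_top :: "nat set \<Rightarrow> nat set" where
  "lower_top S =
    (S - {Suc (Max S) - top_run S..Max S}) \<union> {Max S - top_run S..Max S - 1} \<union> {top_run S}"

definition franklin :: "nat set \<Rightarrow> nat set" where
  "franklin S = (if Min S \<le> top_run S then raise_top S else lower_top S)"

locale distinct_partition =
  fixes S :: "nat set"
  assumes finite: "finite S" and nonempty: "S \<noteq> {}" and zero_notin: "0 \<notin> S"
begin

lemma Min_pos: "0 < Min S"
  using Min_in[OF finite nonempty] zero_notin by (metis gr0I)

lemma Max_minus_top_run_notin: "Max S - top_run S \<notin> S"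
  unfolding top_run_def by (rule LeastI[of _ "Max S"]) (simp add: zero_notin)

lemma Max_minus_in_if_less_top_run: "t < top_run S \<Longrightarrow> Max S - t \<in> S"
  unfolding top_run_def using not_less_Least by blast

lemma top_run_pos: "0 < top_run S"
  using Max_minus_top_run_notin Max_in[OF finite nonempty] by (metis diff_zero gr0I)

lemma top_run_ge: "(\<And>u. u < t \<Longrightarrow> Max S - u \<in> S) \<Longrightarrow> t \<le> top_run S"
  using Max_minus_top_run_notin not_le by blast

lemma top_run_eqI: "(\<And>u. u < t \<Longrightarrow> Max S - u \<in> S) \<Longrightarrow> Max S - t \<notin> S \<Longrightarrow> top_run S = t"
  using top_run_ge Least_le[of "\<lambda>t. Max S - t \<notin> S" t] unfolding top_run_def by (meson le_antisym)

lemma top_run_interval_subset: "t \<le> top_run S \<Longrightarrow> {Suc (Max S) - t..Max S} \<subseteq> S"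
proof
  fix x assume "t \<le> top_run S" "x \<in> {Suc (Max S) - t..Max S}"
  then have "x = Max S - (Max S - x)" "Max S - x < top_run S"
    by auto
  then show "x \<in> S"
    using Max_minus_in_if_less_top_run by metis
qed

lemma top_run_le: "top_run S \<le> Suc (Max S) - Min S"
proof -
  have "Max S - (top_run S - 1) \<in> S"
    using Max_minus_in_if_less_top_run[of "top_run S - 1"] top_run_pos by simp
  then have "Min S \<le> Max S - (top_run S - 1)"
    using finite by simp
  then show ?thesis
    using Min_pos by linarith
qed

lemma eq_top_run_interval:
  assumes "Suc (Max S) - top_run S \<le> Min S"
  shows "S = {Suc (Max S) - top_run S..Max S}"
proof
  show "S \<subseteq> {Suc (Max S) - top_run S..Max S}"
    using assms Min_le[OF finite] Max_ge[OF finite] by (meson atLeastAtMost_iff le_trans subsetI)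
  show "{Suc (Max S) - top_run S..Max S} \<subseteq> S"
    by (rule top_run_interval_subset) simp
qed

end

locale raisable = distinct_partition +
  assumes Min_le_top_run: "Min S \<le> top_run S" and double_Min_le_Max: "2 * Min S \<le> Max S"

locale lowerable = distinct_partition +
  assumes top_run_less_Min: "top_run S < Min S" and double_top_run_less_Max: "2 * top_run S < Max S"

context raisable
begin

lemma mem_raise_top:
  "x \<in> raise_top S \<longleftrightarrow>
    (x \<in> S \<and> x \<noteq> Min S \<and> x \<le> Max S - Min S) \<or> (Max S - Min S + 2 \<le> x \<and> x \<le> Max S + 1)"
  using Max_ge[OF finite, of x] double_Min_le_Max by (auto simp: raise_top_def)

lemma Min_less_raise_top: "x \<in> raise_top S \<Longrightarrow> Min S < x"
  using Min_le[OF finite, of x] double_Min_le_Max by (auto simp: mem_raise_top)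

lemma Max_raise_top: "Max (raise_top S) = Max S + 1"
  by (rule Max_eqI) (use finite Min_pos in \<open>auto simp: raise_top_def mem_raise_top\<close>)

lemma distinct_partition_raise_top: "distinct_partition (raise_top S)"
proof
  show "finite (raise_top S)"
    using finite by (simp add: raise_top_def)
  have "Max S + 1 \<in> raise_top S"
    unfolding mem_raise_top using Min_pos double_Min_le_Max by (intro disjI2) arith
  then show "raise_top S \<noteq> {}"
    by blast
  show "0 \<notin> raise_top S"
    using Min_less_raise_top by blast
qed

lemma top_run_raise_top: "top_run (raise_top S) = Min S"
proof -
  interpret T: distinct_partition "raise_top S"
    by (rule distinct_partition_raise_top)
  show ?thesis
    by (rule T.top_run_eqI)
      (use double_Min_le_Max Min_pos in \<open>auto simp: Max_raise_top mem_raise_top\<close>)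
qed

lemma sum_raise_top: "\<Sum>(raise_top S) = \<Sum>S"
proof -
  define s M where "s = Min S" and "M = Max S"
  define L where "L = {x \<in> S. x \<noteq> s \<and> x \<le> M - s}"
  have sM: "0 < s" "2 * s \<le> M"
    using Min_pos double_Min_le_Max by (simp_all add: s_def M_def)
  have run: "{M - s + 1..M} \<subseteq> S"
    using top_run_interval_subset[OF Min_le_top_run] sM by (simp add: s_def M_def Suc_diff_le)
  have T: "raise_top S = L \<union> {M - s + 2..M + 1}"
    by (auto simp: mem_raise_top L_def s_def M_def)
  have S: "S = insert s (L \<union> {M - s + 1..M})"
    using run Min_in[OF finite nonempty] Max_ge[OF finite] by (auto simp: L_def s_def M_def)
  have "\<Sum>(raise_top S) = \<Sum>L + \<Sum>{M - s + 2..M + 1}"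
    unfolding T using finite by (intro sum.union_disjoint) (auto simp: L_def)
  also have "\<Sum>{M - s + 2..M + 1} = \<Sum>{M - s + 1..M} + s"
    using sum_atLeastAtMost_Suc_shift[of "M - s + 1" M] sM by simp
  also have "\<Sum>L + (\<Sum>{M - s + 1..M} + s) = \<Sum>S"
  proof -
    have "finite L" "s \<notin> L \<union> {M - s + 1..M}" "L \<inter> {M - s + 1..M} = {}"
      using finite sM by (auto simp: L_def)
    then show ?thesis
      by (subst S) (simp add: sum.union_disjoint)
  qed
  finally show ?thesis .
qed

end

context lowerable
begin

lemma less_or_greater_Max_minus_top_run: "x \<in> S \<Longrightarrow> x < Max S - top_run S \<or> Max S - top_run S < x"
  using Max_minus_top_run_notin by (metis linorder_neqE_nat)

lemma mem_lower_top:
  "x \<in> lower_top S \<longleftrightarrow>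
    (x \<in> S \<and> x < Max S - top_run S) \<or> (Max S - top_run S \<le> x \<and> x < Max S) \<or> x = top_run S"
  using Max_ge[OF finite, of x] less_or_greater_Max_minus_top_run[of x] double_top_run_less_Max
  by (auto simp: lower_top_def)

lemma top_run_notin: "top_run S \<notin> S"
  using Min_le[OF finite] top_run_less_Min by force

lemma Min_lower_top: "Min (lower_top S) = top_run S"
proof (rule Min_eqI)
  show "finite (lower_top S)" "top_run S \<in> lower_top S"
    using finite by (simp_all add: lower_top_def)
  show "top_run S \<le> y" if "y \<in> lower_top S" for y
    using that Min_le[OF finite, of y] top_run_less_Min double_top_run_less_Max
    by (auto simp: mem_lower_top)
qed

lemma Max_lower_top: "Max (lower_top S) = Max S - 1"
  by (rule Max_eqI) (use finite top_run_pos double_top_run_less_Max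
    in \<open>auto simp: lower_top_def mem_lower_top\<close>)

lemma distinct_partition_lower_top: "distinct_partition (lower_top S)"
proof
  show "finite (lower_top S)"
    using finite by (simp add: lower_top_def)
  show "lower_top S \<noteq> {}"
    by (simp add: lower_top_def)
  show "0 \<notin> lower_top S"
    using top_run_pos double_top_run_less_Max zero_notin by (auto simp: mem_lower_top)
qed

lemma top_run_le_top_run_lower_top: "top_run S \<le> top_run (lower_top S)"
proof -
  interpret T: distinct_partition "lower_top S"
    by (rule distinct_partition_lower_top)
  show ?thesis
    by (rule T.top_run_ge)
      (use double_top_run_less_Max in \<open>auto simp: Max_lower_top mem_lower_top\<close>)
qed

lemma sum_lower_top: "\<Sum>(lower_top S) = \<Sum>S"
proof -
  define r M where "r = top_run S" and "M = Max S"
  define L where "L = {x \<in> S. x < M - r}"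
  have rM: "0 < r" "2 * r < M" "r \<notin> S"
    using top_run_pos double_top_run_less_Max top_run_notin by (simp_all add: r_def M_def)
  have run: "{M - r + 1..M} \<subseteq> S"
    using top_run_interval_subset[of r] rM by (simp add: r_def M_def Suc_diff_le)
  have T: "lower_top S = L \<union> insert r {M - r..M - 1}"
    using rM by (auto simp: mem_lower_top L_def r_def M_def)
  have S: "S = L \<union> {M - r + 1..M}"
  proof (rule set_eqI)
    fix x
    show "x \<in> S \<longleftrightarrow> x \<in> L \<union> {M - r + 1..M}"
      using run Max_ge[OF finite, of x] less_or_greater_Max_minus_top_run[of x]
      by (auto simp: L_def r_def M_def)
  qed
  have "\<Sum>(lower_top S) = \<Sum>L + (r + \<Sum>{M - r..M - 1})"
    unfolding T using finite rM by (subst sum.union_disjoint) (auto simp: L_def)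
  also have "r + \<Sum>{M - r..M - 1} = \<Sum>{M - r + 1..M}"
    using sum_atLeastAtMost_Suc_shift[of "M - r" "M - 1"] rM by simp
  also have "\<Sum>L + \<Sum>{M - r + 1..M} = \<Sum>S"
  proof -
    have "finite L" "L \<inter> {M - r + 1..M} = {}"
      using finite by (auto simp: L_def)
    then show ?thesis
      by (subst S) (simp add: sum.union_disjoint)
  qed
  finally show ?thesis .
qed

end

lemma (in raisable) lowerable_raise_top: "lowerable (raise_top S)"
proof (intro lowerable.intro lowerable_axioms.intro)
  show "distinct_partition (raise_top S)"
    by (rule distinct_partition_raise_top)
  interpret T: distinct_partition "raise_top S"
    by (rule distinct_partition_raise_top)
  show "top_run (raise_top S) < Min (raise_top S)"
    using Min_less_raise_top T.finite T.nonempty by (simp add: top_run_raise_top)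
  show "2 * top_run (raise_top S) < Max (raise_top S)"
    using double_Min_le_Max by (simp add: top_run_raise_top Max_raise_top)
qed

lemma (in lowerable) raisable_lower_top: "raisable (lower_top S)"
proof (intro raisable.intro raisable_axioms.intro)
  show "distinct_partition (lower_top S)"
    by (rule distinct_partition_lower_top)
  show "Min (lower_top S) \<le> top_run (lower_top S)"
    using top_run_le_top_run_lower_top by (simp add: Min_lower_top)
  show "2 * Min (lower_top S) \<le> Max (lower_top S)"
    using double_top_run_less_Max by (simp add: Min_lower_top Max_lower_top)
qed

lemma (in raisable) lower_top_raise_top: "lower_top (raise_top S) = S"
proof -
  interpret T: lowerable "raise_top S"
    by (rule lowerable_raise_top)
  have run: "{Suc (Max S) - Min S..Max S} \<subseteq> S"
    by (rule top_run_interval_subset[OF Min_le_top_run])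
  show ?thesis
  proof (rule set_eqI)
    fix x
    show "x \<in> lower_top (raise_top S) \<longleftrightarrow> x \<in> S"
      unfolding T.mem_lower_top Max_raise_top top_run_raise_top mem_raise_top
      using run Min_in[OF finite nonempty] Max_ge[OF finite, of x] Min_le[OF finite, of x]
        double_Min_le_Max
      by auto
  qed
qed

lemma (in lowerable) raise_top_lower_top: "raise_top (lower_top S) = S"
proof -
  interpret T: raisable "lower_top S"
    by (rule raisable_lower_top)
  have run: "{Suc (Max S) - top_run S..Max S} \<subseteq> S"
    by (rule top_run_interval_subset[OF order_refl])
  show ?thesis
  proof (rule set_eqI)
    fix x
    show "x \<in> raise_top (lower_top S) \<longleftrightarrow> x \<in> S"
      unfolding T.mem_raise_top Max_lower_top Min_lower_top mem_lower_top
      using run Max_ge[OF finite, of x] top_run_notin less_or_greater_Max_minus_top_run[of x]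
        double_top_run_less_Max
      by auto
  qed
qed

context distinct_partition
begin

lemma franklin_involution:
  assumes "raisable S \<or> lowerable S"
  shows "distinct_partition (franklin S) \<and> \<Sum>(franklin S) = \<Sum>S \<and> franklin (franklin S) = S \<and> franklin S \<noteq> S"
  using assms
proof
  assume "raisable S"
  then interpret raisable S .
  interpret T: lowerable "raise_top S"
    by (rule lowerable_raise_top)
  have "franklin S = raise_top S"
    using Min_le_top_run by (simp add: franklin_def)
  moreover have "franklin (raise_top S) = lower_top (raise_top S)"
    using T.top_run_less_Min by (simp add: franklin_def)
  ultimately show ?thesis
    using distinct_partition_raise_top sum_raise_top lower_top_raise_top Max_raise_top by force
next
  assume "lowerable S"
  then interpret lowerable S .
  interpret T: raisable "lower_top S"
    by (rule raisable_lower_top)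
  have "franklin S = lower_top S"
    using top_run_less_Min by (simp add: franklin_def)
  moreover have "franklin (lower_top S) = raise_top (lower_top S)"
    using T.Min_le_top_run by (simp add: franklin_def)
  ultimately show ?thesis
    using distinct_partition_lower_top sum_lower_top raise_top_lower_top Max_lower_top double_top_run_less_Max
    by force
qed

lemma pentagonal_if_not_raisable_or_lowerable:
  assumes "\<not> raisable S" "\<not> lowerable S"
  shows "\<exists>m. 24 * \<Sum>S + 1 = m\<^sup>2"
proof (cases "Min S \<le> top_run S")
  case True
  then have "Max S < 2 * Min S"
    using assms(1) raisable.intro[OF distinct_partition_axioms] raisable_axioms.intro by force
  then have "Suc (Max S) - top_run S = Min S" "Max S = 2 * Min S - 1"
    using top_run_le True by linarith+
  then have "S = {Min S..2 * Min S - 1}"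
    using eq_top_run_interval by simp
  also have "\<dots> = {Min S..<2 * Min S}"
    using Min_pos by auto
  finally show ?thesis
    using pentagonal_number_square[OF Min_pos] by metis
next
  case False
  then have "Max S \<le> 2 * top_run S"
    using assms(2) lowerable.intro[OF distinct_partition_axioms] lowerable_axioms.intro by force
  then have "Suc (Max S) - top_run S \<le> Min S" "Max S = 2 * top_run S"
    using top_run_le False by linarith+
  then have "S = {Suc (top_run S)..2 * top_run S}"
    using eq_top_run_interval by simp
  also have "\<dots> = {top_run S<..2 * top_run S}"
    by auto
  finally show ?thesis
    using second_pentagonal_number_square by metis
qed

end

lemma franklin_involution_distinct_partitions:
  assumes "\<nexists>m. 24 * n + 1 = m\<^sup>2" "S \<in> distinct_partitions n"
  shows "franklin S \<in> distinct_partitions n \<and> franklin (franklin S) = S \<and> franklin S \<noteq> S"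
proof -
  have S: "finite S" "0 \<notin> S" "\<Sum>S = n"
    using assms(2) by (simp_all add: distinct_partitions_def)
  have "n \<noteq> 0"
    using assms(1) by (metis add_0 mult_0_right power_one)
  with S have "distinct_partition S"
    by unfold_locales auto
  then interpret distinct_partition S .
  have "raisable S \<or> lowerable S"
    using pentagonal_if_not_raisable_or_lowerable assms(1) S(3) by blast
  with S show ?thesis
    using franklin_involution by (auto simp: distinct_partitions_def distinct_partition_def)
qed

lemma even_b2_if_not_square:
  assumes "\<nexists>m. 24 * n + 1 = m\<^sup>2"
  shows "even (b 2 n)"
  unfolding b2_eq_card_distinct_partitions
  using even_card_if_fixpoint_free_involution franklin_involution_distinct_partitions[OF assms] by metis

section \<open>The arithmetic progressions\<close>

lemma prime_square_mod_24:
  fixes p :: nat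
  assumes "prime p" "5 \<le> p"
  shows "p\<^sup>2 mod 24 = 1"
proof -
  have "m dvd p \<Longrightarrow> m = 1 \<or> m = p" for m
    using assms(1) by (simp add: prime_nat_iff)
  then have "\<not> 2 dvd p" "\<not> 3 dvd p"
    using assms(2) by force+
  then have "p mod 24 = 1 \<or> p mod 24 = 5 \<or> p mod 24 = 7 \<or> p mod 24 = 11 \<or>
      p mod 24 = 13 \<or> p mod 24 = 17 \<or> p mod 24 = 19 \<or> p mod 24 = 23"
    by presburger
  then show ?thesis
    unfolding power_mod[of p, symmetric] by auto
qed

lemma prod_squares_mod_24:
  "\<forall>p \<in> set ps. prime p \<and> 5 \<le> p \<Longrightarrow> (\<Prod>p\<leftarrow>ps. p\<^sup>2) mod 24 = (1::nat)"
  by (induction ps) (simp_all add: mod_mult_eq[symmetric] prime_square_mod_24)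

lemma square_cancel_square_factor:
  fixes R x m :: nat
  assumes "R \<noteq> 0" "R\<^sup>2 * x = m\<^sup>2"
  shows "\<exists>m'. x = m'\<^sup>2"
proof -
  have "R dvd m"
    using assms(2) pow_divides_pow_iff[of 2 R m] by (metis dvd_triv_left zero_less_numeral)
  then obtain m' where "m = R * m'" ..
  with assms show ?thesis
    by (auto simp: power_mult_distrib)
qed

lemma prime_times_non_multiple_not_square:
  fixes p a m :: nat
  assumes "prime p" "\<not> p dvd a"
  shows "p * a \<noteq> m\<^sup>2"
proof
  assume sq: "p * a = m\<^sup>2"
  then have "p dvd m"
    using assms(1) prime_dvd_power by (metis dvd_triv_left)
  then have "p * p dvd p * a"
    unfolding sq by (simp add: power2_eq_square mult_dvd_mono)
  with assms show False
    using prime_gt_0_nat by simp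
qed

lemma prime_not_dvd_24:
  fixes p :: nat
  assumes "prime p" "5 \<le> p"
  shows "\<not> p dvd 24"
proof
  assume "p dvd 24"
  then have "p dvd p\<^sup>2 mod 24"
    by (simp add: dvd_mod)
  with assms show False
    by (simp add: prime_square_mod_24)
qed

lemma progression_times_24_plus_1:
  fixes Q p n i :: nat
  assumes "Q * p\<^sup>2 mod 24 = 1"
  shows "24 * (Q * p\<^sup>2 * n + ((24 * i + p) * Q * p - 1) div 24) + 1
    = Q * (p * (p * (24 * n + 1) + 24 * i))"
proof -
  obtain c where c: "Q * p\<^sup>2 = 24 * c + 1"
    using assms div_mult_mod_eq[of "Q * p\<^sup>2" 24] by (metis add.commute mult.commute)
  have "(24 * i + p) * Q * p = 24 * (i * Q * p) + Q * p\<^sup>2"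
    by (simp add: algebra_simps power2_eq_square)
  also have "\<dots> = 24 * (i * Q * p + c) + 1"
    unfolding c by simp
  finally have "((24 * i + p) * Q * p - 1) div 24 = i * Q * p + c"
    by simp
  then have "24 * (Q * p\<^sup>2 * n + ((24 * i + p) * Q * p - 1) div 24) + 1
      = 24 * (Q * p\<^sup>2 * n) + 24 * (i * Q * p) + (24 * c + 1)"
    by simp
  also have "\<dots> = Q * (p * (p * (24 * n + 1) + 24 * i))"
    unfolding c[symmetric] by (simp add: algebra_simps power2_eq_square)
  finally show ?thesis .
qed

lemma not_square_progression:
  fixes R p n i m :: nat
  assumes "prime p" "5 \<le> p" "0 < i" "i < p" "R \<noteq> 0"
  shows "R\<^sup>2 * (p * (p * (24 * n + 1) + 24 * i)) \<noteq> m\<^sup>2"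
proof -
  have "\<not> p dvd 24 * i"
    using prime_not_dvd_24[OF assms(1,2)] assms(1,3,4) by (auto simp: prime_dvd_mult_iff dest: dvd_imp_le)
  then have "\<not> p dvd p * (24 * n + 1) + 24 * i"
    by (metis dvd_add_right_iff dvd_triv_left)
  then show ?thesis
    using square_cancel_square_factor[OF assms(5)] prime_times_non_multiple_not_square[OF assms(1)]
    by metis
qed

theorem theorem3p6:
  fixes ps :: "nat list" and n i :: nat
  assumes "length ps \<ge> 1"
    and "\<forall>p \<in> set ps. prime p \<and> p \<ge> 5"
    and "1 \<le> i" and "i \<le> last ps - 1"
  shows "even (b 2 ((\<Prod>p\<leftarrow>ps. p^2) * n
          + ((24 * i + last ps) * (\<Prod>p\<leftarrow>butlast ps. p^2) * last ps - 1) div 24))"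
proof (rule even_b2_if_not_square)
  obtain qs p where ps: "ps = qs @ [p]"
    using assms(1) by (cases ps rule: rev_exhaust) auto
  define R where "R = prod_list qs"
  have p: "prime p" "5 \<le> p" and i: "0 < i" "i < p"
    using assms(2-4) by (auto simp: ps)
  have R: "R\<^sup>2 mod 24 = 1"
    using prod_squares_mod_24[of qs] assms(2) by (simp add: ps R_def prod_list_power)
  then have "R \<noteq> 0"
    by (metis mod_0 power_zero_numeral zero_neq_one)
  have "R\<^sup>2 * p\<^sup>2 mod 24 = 1"
    using R prime_square_mod_24[OF p] mod_mult_eq[of "R\<^sup>2" 24 "p\<^sup>2"] by simp
  moreover have "(\<Prod>q\<leftarrow>ps. q\<^sup>2) = R\<^sup>2 * p\<^sup>2" "(\<Prod>q\<leftarrow>butlast ps. q\<^sup>2) = R\<^sup>2" "last ps = p"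
    by (simp_all add: ps R_def prod_list_power)
  ultimately show "\<nexists>m. 24 * ((\<Prod>p\<leftarrow>ps. p^2) * n
          + ((24 * i + last ps) * (\<Prod>p\<leftarrow>butlast ps. p^2) * last ps - 1) div 24) + 1 = m\<^sup>2"
    using progression_times_24_plus_1 not_square_progression[OF p i \<open>R \<noteq> 0\<close>] by metis
qed

end
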